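(* Let $G=(V,E)$ be a (directed) graph with positive edge weights $w$ and source $s$ from which every vertex is reachable, with no two vertices equidistant from $s$. Run Dijkstra's algorithm on $(G,s,w)$ and, for each $x_i\in V\setminus\{s\}$, let $[a_i,b_i]$ be its timestamp interval. For each $x_i\in V\setminus\{s\}$ choose a real value $r_i\in[a_i,b_i]$. If all $r_i$ are distinct, then the sequence $L$ ordering all $x_i$ by $r_i$ is a linearization of $(G,s)$.
   Context: Dijkstra's algorithm with a min-heap $H$: set distance$[v]=\infty$ for all $v$, distance$[s]=0$, push $s$ with key $0$. While $H$ is nonempty: pop the minimum $u$, append it to the output, and for each edge $(u,v)$: if distance$[v]=\infty$, set distance$[v]=$distance$[u]+w(u,v)$ and push $v$ with that key; else if $v\in H$ and distance$[v]>$distance$[u]+w(u,v)$, update distance$[v]$ and decrease its key. Time is a counter, initially $0$, incremented after every \textsc{Push}; $a_i$ and $b_i$ are the times $x_i$ is pushed and popped. A linearization of $(G,s)$ is a permutation $L$ of $V\setminus\{s\}$ such that for some edge weighting $w'$ of $G$, $L$ is the order of the vertices of $V\setminus\{s\}$ by their shortest-path distance from $s$ under $w'$. *)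

theory Defs
  imports Complex_Main
begin

definition walk :: "('v \<times> 'v) set \<Rightarrow> 'v list \<Rightarrow> bool" where
  "walk E p = (p \<noteq> [] \<and> successively (\<lambda>x y. (x, y) \<in> E) p)"

definition walk_weight :: "('v \<Rightarrow> 'v \<Rightarrow> real) \<Rightarrow> 'v list \<Rightarrow> real" where
  "walk_weight w p = sum_list (map (\<lambda>(x, y). w x y) (zip p (tl p)))"

definition sp_dist :: "('v \<times> 'v) set \<Rightarrow> ('v \<Rightarrow> 'v \<Rightarrow> real) \<Rightarrow> 'v \<Rightarrow> 'v \<Rightarrow> real" where
  "sp_dist E w s v = Inf {walk_weight w p | p. walk E p \<and> hd p = s \<and> last p = v}"

definition is_linearization :: "'v set \<Rightarrow> ('v \<times> 'v) set \<Rightarrow> 'v \<Rightarrow> 'v list \<Rightarrow> bool" where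
  "is_linearization V E s L =
     (set L = V - {s} \<and> distinct L \<and>
      (\<exists>w'. (\<forall>(u, v) \<in> E. 0 < w' u v) \<and>
            sorted_wrt (\<lambda>x y. sp_dist E w' s x < sp_dist E w' s y) L))"

(* State of Dijkstra's algorithm.  ds_dist v = None means distance[v] = \<infinity>;
   the heap key of v \<in> ds_heap is its current distance. *)
record 'v dstate =
  ds_dist :: "'v \<Rightarrow> real option"
  ds_heap :: "'v set"
  ds_out  :: "'v list"
  ds_time :: nat
  ds_push :: "'v \<Rightarrow> nat"   (* a_i: time at which vertex was pushed *)
  ds_pop  :: "'v \<Rightarrow> nat"   (* b_i: time at which vertex was popped *)

definition relax :: "('v \<Rightarrow> 'v \<Rightarrow> real) \<Rightarrow> 'v \<Rightarrow> 'v \<Rightarrow> 'v dstate \<Rightarrow> 'v dstate" where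
  "relax w u v S =
    (let nd = the (ds_dist S u) + w u v in
     case ds_dist S v of
       None \<Rightarrow> S\<lparr>ds_dist := (ds_dist S)(v := Some nd),
                  ds_heap := insert v (ds_heap S),
                  ds_push := (ds_push S)(v := ds_time S),
                  ds_time := Suc (ds_time S)\<rparr>
     | Some dv \<Rightarrow> (if v \<in> ds_heap S \<and> nd < dv
                   then S\<lparr>ds_dist := (ds_dist S)(v := Some nd)\<rparr> else S))"

definition dijkstra_init :: "'v \<Rightarrow> 'v dstate" where
  "dijkstra_init s =
    \<lparr>ds_dist = (\<lambda>_. None)(s := Some 0), ds_heap = {s}, ds_out = [], ds_time = 1,
     ds_push = (\<lambda>_. 0), ds_pop = (\<lambda>_. 0)\<rparr>"

definition dijkstra_step ::
  "('v \<Rightarrow> 'v \<Rightarrow> real) \<Rightarrow> ('v \<Rightarrow> 'v list) \<Rightarrow> 'v dstate \<Rightarrow> 'v dstate \<Rightarrow> bool" where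
  "dijkstra_step w adj S S' =
    (\<exists>u \<in> ds_heap S. (\<forall>v \<in> ds_heap S. the (ds_dist S u) \<le> the (ds_dist S v)) \<and>
       S' = fold (relax w u) (adj u)
              (S\<lparr>ds_heap := ds_heap S - {u}, ds_out := ds_out S @ [u],
                 ds_pop := (ds_pop S)(u := ds_time S)\<rparr>))"

definition valid_adj :: "('v \<times> 'v) set \<Rightarrow> ('v \<Rightarrow> 'v list) \<Rightarrow> bool" where
  "valid_adj E adj = (\<forall>u. distinct (adj u) \<and> set (adj u) = {v. (u, v) \<in> E})"

end

theory Submission
  imports Defs
begin

(* A vertex x other than s is pushed while an edge (p, x) out of an already popped vertex p is
   relaxed, so b_p <= a_x; and a_x >= 1, since the counter is 1 once s is pushed.  Hence
   r_p <= b_p <= a_x <= r_x, strictly by distinctness, so with r_s := 0 every vertex other than s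
   has an in-neighbour of smaller r-value.  For such a potential r the positive weights
   w'(p, x) = r_x - r_p if r_p < r_x, and 1 otherwise, make no walk from s to x lighter than
   r_x - r_s, and descending through in-neighbours gives a walk of exactly that weight. *)

lemma walk_weight_singleton [simp]: "walk_weight w [a] = 0"
  by (simp add: walk_weight_def)

lemma walk_weight_Cons_Cons [simp]:
  "walk_weight w (a # b # p) = w a b + walk_weight w (b # p)"
  by (simp add: walk_weight_def)

lemma walk_weight_snoc:
  "p \<noteq> [] \<Longrightarrow> walk_weight w (p @ [x]) = walk_weight w p + w (last p) x"
  by (induction p rule: induct_list012) simp_all

lemma walk_snoc: "walk E p \<Longrightarrow> (last p, x) \<in> E \<Longrightarrow> walk E (p @ [x])"
  by (auto simp: walk_def successively_append_iff)

lemma walk_weight_ge_potential_diff: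
  assumes feasible: "\<forall>(a, b) \<in> E. d b - d a \<le> w a b" and "walk E p"
  shows "d (last p) - d (hd p) \<le> walk_weight w p"
  using \<open>walk E p\<close>
proof (induction p rule: induct_list012)
  case (3 a b p)
  then have "(a, b) \<in> E" "walk E (b # p)" by (simp_all add: walk_def)
  with feasible 3 show ?case by fastforce
qed (simp_all add: walk_def)

lemma exists_walk_weight_eq_potential_diff:
  fixes d :: "'v \<Rightarrow> real"
  assumes "finite V" "s \<in> V"
    and descent: "\<forall>y \<in> V - {s}. \<exists>p \<in> V. (p, y) \<in> E \<and> d p < d y \<and> w p y = d y - d p"
    and "x \<in> V"
  shows "\<exists>p. walk E p \<and> hd p = s \<and> last p = x \<and> walk_weight w p = d x - d s"
  using \<open>x \<in> V\<close>
proof (induction "card {y \<in> V. d y < d x}" arbitrary: x rule: less_induct)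
  case less
  show ?case
  proof (cases "x = s")
    case True
    then show ?thesis by (intro exI[of _ "[s]"]) (simp add: walk_def)
  next
    case False
    with descent less.prems obtain p where p: "p \<in> V" "(p, x) \<in> E" "d p < d x" "w p x = d x - d p"
      by blast
    have "{y \<in> V. d y < d p} \<subset> {y \<in> V. d y < d x}"
      using p by auto
    then have "card {y \<in> V. d y < d p} < card {y \<in> V. d y < d x}"
      using \<open>finite V\<close> by (simp add: psubset_card_mono)
    with less.hyps p(1) obtain q where q: "walk E q" "hd q = s" "last q = p" "walk_weight w q = d p - d s"
      by blast
    then have "q \<noteq> []" by (simp add: walk_def)
    with q p show ?thesis
      by (intro exI[of _ "q @ [x]"]) (simp add: walk_snoc walk_weight_snoc)
  qed
qed

lemma sp_dist_eq_potential_diff: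
  fixes d :: "'v \<Rightarrow> real"
  assumes "finite V" "s \<in> V"
    and "\<forall>(a, b) \<in> E. d b - d a \<le> w a b"
    and "\<forall>y \<in> V - {s}. \<exists>p \<in> V. (p, y) \<in> E \<and> d p < d y \<and> w p y = d y - d p"
    and "x \<in> V"
  shows "sp_dist E w s x = d x - d s"
  unfolding sp_dist_def
proof (rule cInf_eq_minimum)
  show "d x - d s \<in> {walk_weight w p |p. walk E p \<and> hd p = s \<and> last p = x}"
    using exists_walk_weight_eq_potential_diff[OF assms(1,2,4,5)] by force
next
  fix c assume "c \<in> {walk_weight w p |p. walk E p \<and> hd p = s \<and> last p = x}"
  then show "d x - d s \<le> c"
    using walk_weight_ge_potential_diff[OF assms(3)] by force
qed

lemma is_linearization_if_in_neighbour_below: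
  fixes d :: "'v \<Rightarrow> real"
  assumes "finite V" "s \<in> V"
    and below: "\<forall>x \<in> V - {s}. \<exists>p \<in> V. (p, x) \<in> E \<and> d p < d x"
    and L: "set L = V - {s}" "distinct L" "sorted_wrt (\<lambda>x y. d x < d y) L"
  shows "is_linearization V E s L"
proof -
  define w' where "w' a b = (if d a < d b then d b - d a else 1)" for a b
  have "\<forall>(a, b) \<in> E. d b - d a \<le> w' a b"
    by (auto simp: w'_def)
  moreover have "\<forall>y \<in> V - {s}. \<exists>p \<in> V. (p, y) \<in> E \<and> d p < d y \<and> w' p y = d y - d p"
    using below by (auto simp: w'_def)
  ultimately have "sp_dist E w' s x = d x - d s" if "x \<in> V" for x
    using sp_dist_eq_potential_diff[OF assms(1,2) _ _ that] by blast
  then have "sorted_wrt (\<lambda>x y. sp_dist E w' s x < sp_dist E w' s y) L"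
    using sorted_wrt_mono_rel[OF _ L(3)] L(1) by fastforce
  moreover have "\<forall>(u, v) \<in> E. 0 < w' u v"
    by (auto simp: w'_def)
  ultimately show ?thesis
    using L(1,2) unfolding is_linearization_def by blast
qed

definition discovered :: "'v dstate \<Rightarrow> 'v set" where
  "discovered S = {v. ds_dist S v \<noteq> None}"

lemma relax_fields:
  "discovered (relax w u v S) = insert v (discovered S)"
  "ds_heap (relax w u v S) = (if v \<in> discovered S then ds_heap S else insert v (ds_heap S))"
  "ds_push (relax w u v S) = (if v \<in> discovered S then ds_push S else (ds_push S)(v := ds_time S))"
  "ds_time (relax w u v S) = (if v \<in> discovered S then ds_time S else Suc (ds_time S))"
  "ds_pop (relax w u v S) = ds_pop S"
  by (auto simp: relax_def Let_def discovered_def split: option.split)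

lemma discovered_fold_relax:
  "discovered (fold (relax w u) vs S) = discovered S \<union> set vs"
  by (induction vs arbitrary: S) (auto simp: relax_fields)

(* X contains the vertex whose out-edges are currently being relaxed. *)
definition dijkstra_inv :: "('v \<times> 'v) set \<Rightarrow> 'v \<Rightarrow> 'v set \<Rightarrow> 'v dstate \<Rightarrow> bool" where
  "dijkstra_inv E s X S \<longleftrightarrow>
     s \<in> discovered S \<and> ds_heap S \<subseteq> discovered S \<and> 1 \<le> ds_time S \<and>
     (\<forall>x \<in> discovered S - ds_heap S - X. \<forall>y. (x, y) \<in> E \<longrightarrow> y \<in> discovered S) \<and>
     (\<forall>v \<in> discovered S - {s}. 1 \<le> ds_push S v \<and>
        (\<exists>p \<in> discovered S - ds_heap S. (p, v) \<in> E \<and> p \<noteq> v \<and> ds_pop S p \<le> ds_push S v))"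

definition processing_inv :: "('v \<times> 'v) set \<Rightarrow> 'v \<Rightarrow> 'v \<Rightarrow> 'v dstate \<Rightarrow> bool" where
  "processing_inv E s u S \<longleftrightarrow>
     dijkstra_inv E s {u} S \<and> u \<in> discovered S - ds_heap S \<and> ds_pop S u \<le> ds_time S"

lemma processing_inv_relax:
  assumes "processing_inv E s u S" "(u, v) \<in> E"
  shows "processing_inv E s u (relax w u v S)"
proof (cases "v \<in> discovered S")
  case True
  with assms(1) show ?thesis
    by (simp add: processing_inv_def dijkstra_inv_def relax_fields insert_absorb)
next
  case False
  let ?T = "relax w u v S"
  have T: "discovered ?T = insert v (discovered S)" "ds_heap ?T = insert v (ds_heap S)"
    "ds_push ?T = (ds_push S)(v := ds_time S)" "ds_time ?T = Suc (ds_time S)" "ds_pop ?T = ds_pop S"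
    using False by (simp_all add: relax_fields)
  from assms(1) have inv: "dijkstra_inv E s {u} S" and u: "u \<in> discovered S - ds_heap S"
    and pop_u: "ds_pop S u \<le> ds_time S"
    by (simp_all add: processing_inv_def)
  from inv have s: "s \<in> discovered S" and heap: "ds_heap S \<subseteq> discovered S"
    and time: "1 \<le> ds_time S"
    and closed_S: "\<forall>x \<in> discovered S - ds_heap S - {u}. \<forall>y. (x, y) \<in> E \<longrightarrow> y \<in> discovered S"
    and parent_S: "\<forall>x \<in> discovered S - {s}. 1 \<le> ds_push S x \<and>
        (\<exists>p \<in> discovered S - ds_heap S. (p, x) \<in> E \<and> p \<noteq> x \<and> ds_pop S p \<le> ds_push S x)"
    unfolding dijkstra_inv_def by blast+
  have parent: "\<exists>p \<in> discovered ?T - ds_heap ?T. (p, x) \<in> E \<and> p \<noteq> x \<and> ds_pop ?T p \<le> ds_push ?T x"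
    if "x \<in> discovered ?T - {s}" for x
  proof (cases "x = v")
    case True
    with u pop_u False assms(2) show ?thesis
      unfolding T by (intro bexI[of _ u]) auto
  next
    case False
    with that parent_S obtain p where "p \<in> discovered S - ds_heap S" "(p, x) \<in> E" "p \<noteq> x"
      "ds_pop S p \<le> ds_push S x"
      unfolding T by blast
    with False \<open>v \<notin> discovered S\<close> show ?thesis
      unfolding T by (intro bexI[of _ p]) auto
  qed
  have push: "1 \<le> ds_push ?T x" if "x \<in> discovered ?T - {s}" for x
  proof (cases "x = v")
    case True
    with time show ?thesis
      unfolding T by simp
  next
    case False
    with that parent_S show ?thesis
      unfolding T by simp
  qed
  have closed: "y \<in> discovered ?T" if "x \<in> discovered ?T - ds_heap ?T - {u}" "(x, y) \<in> E" for x y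
    using that closed_S unfolding T by blast
  have "s \<in> discovered ?T" "ds_heap ?T \<subseteq> discovered ?T" "1 \<le> ds_time ?T"
    using s heap time unfolding T by auto
  with parent push closed have "dijkstra_inv E s {u} ?T"
    unfolding dijkstra_inv_def by blast
  with u pop_u False show ?thesis
    unfolding processing_inv_def T by auto
qed

lemma processing_inv_fold_relax:
  assumes "processing_inv E s u S" "set vs \<subseteq> {v. (u, v) \<in> E}"
  shows "processing_inv E s u (fold (relax w u) vs S)"
  using assms by (induction vs arbitrary: S) (simp_all add: processing_inv_relax)

lemma processing_inv_pop:
  assumes inv: "dijkstra_inv E s {} S" and u: "u \<in> ds_heap S"
  shows "processing_inv E s u (S\<lparr>ds_heap := ds_heap S - {u}, ds_out := ds_out S @ [u],
                                 ds_pop := (ds_pop S)(u := ds_time S)\<rparr>)"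
    (is "processing_inv E s u ?S")
proof -
  have S: "discovered ?S = discovered S" "ds_heap ?S = ds_heap S - {u}"
    "ds_pop ?S = (ds_pop S)(u := ds_time S)" "ds_push ?S = ds_push S" "ds_time ?S = ds_time S"
    by (simp_all add: discovered_def)
  from inv have s: "s \<in> discovered S" and heap: "ds_heap S \<subseteq> discovered S"
    and time: "1 \<le> ds_time S"
    and closed: "\<forall>x \<in> discovered S - ds_heap S. \<forall>y. (x, y) \<in> E \<longrightarrow> y \<in> discovered S"
    and parent: "\<forall>x \<in> discovered S - {s}. 1 \<le> ds_push S x \<and>
        (\<exists>p \<in> discovered S - ds_heap S. (p, x) \<in> E \<and> p \<noteq> x \<and> ds_pop S p \<le> ds_push S x)"
    unfolding dijkstra_inv_def by blast+
  have parent': "\<exists>p \<in> discovered ?S - ds_heap ?S. (p, x) \<in> E \<and> p \<noteq> x \<and> ds_pop ?S p \<le> ds_push ?S x"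
    if "x \<in> discovered ?S - {s}" for x
  proof -
    from that parent obtain p where "p \<in> discovered S - ds_heap S" "(p, x) \<in> E" "p \<noteq> x"
      "ds_pop S p \<le> ds_push S x"
      unfolding S by blast
    moreover from this(1) u have "p \<noteq> u" by blast
    ultimately show ?thesis
      unfolding S by (intro bexI[of _ p]) auto
  qed
  have "dijkstra_inv E s {u} ?S"
    using s heap time closed parent parent' unfolding dijkstra_inv_def S by blast
  with u heap show ?thesis
    unfolding processing_inv_def S by auto
qed

lemma dijkstra_inv_step:
  assumes "dijkstra_inv E s {} S" "dijkstra_step w adj S S'" "valid_adj E adj"
  shows "dijkstra_inv E s {} S'"
proof -
  from assms(2) obtain u where u: "u \<in> ds_heap S"
    and S': "S' = fold (relax w u) (adj u) (S\<lparr>ds_heap := ds_heap S - {u}, ds_out := ds_out S @ [u],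
                                              ds_pop := (ds_pop S)(u := ds_time S)\<rparr>)"
    unfolding dijkstra_step_def by blast
  from assms(3) have adj: "set (adj u) = {v. (u, v) \<in> E}"
    by (simp add: valid_adj_def)
  have "processing_inv E s u S'"
    unfolding S' using processing_inv_pop[OF assms(1) u] adj
    by (intro processing_inv_fold_relax) simp_all
  moreover have "v \<in> discovered S'" if "(u, v) \<in> E" for v
    unfolding S' discovered_fold_relax using that adj by simp
  ultimately show ?thesis
    unfolding processing_inv_def dijkstra_inv_def by blast
qed

lemma dijkstra_inv_reachable:
  assumes "(dijkstra_step w adj)\<^sup>*\<^sup>* (dijkstra_init s) S" "valid_adj E adj"
  shows "dijkstra_inv E s {} S"
  using assms(1)
proof (induction rule: rtranclp_induct)
  case base
  show ?case by (simp add: dijkstra_inv_def dijkstra_init_def discovered_def)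
next
  case (step S S')
  with assms(2) show ?case by (blast intro: dijkstra_inv_step)
qed

lemma discovered_if_rtrancl:
  assumes "dijkstra_inv E s {} S" "ds_heap S = {}" "(s, v) \<in> E\<^sup>*"
  shows "v \<in> discovered S"
  using assms(3)
proof (induction rule: rtrancl_induct)
  case base
  from assms(1) show ?case by (simp add: dijkstra_inv_def)
next
  case (step y z)
  with assms(1,2) show ?case unfolding dijkstra_inv_def by blast
qed

lemma dijkstra_push_after_pop_of_in_neighbour:
  assumes "(dijkstra_step w adj)\<^sup>*\<^sup>* (dijkstra_init s) S" "valid_adj E adj" "ds_heap S = {}"
    and "(s, x) \<in> E\<^sup>*" "x \<noteq> s"
  shows "1 \<le> ds_push S x \<and> (\<exists>p. (p, x) \<in> E \<and> p \<noteq> x \<and> ds_pop S p \<le> ds_push S x)"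
proof -
  have inv: "dijkstra_inv E s {} S"
    using assms(1,2) by (rule dijkstra_inv_reachable)
  moreover have "x \<in> discovered S"
    using inv assms(3,4) by (rule discovered_if_rtrancl)
  ultimately show ?thesis
    using \<open>x \<noteq> s\<close> unfolding dijkstra_inv_def by blast
qed

lemma in_neighbour_with_smaller_timestamp:
  fixes r :: "'v \<Rightarrow> real"
  assumes "(dijkstra_step w adj)\<^sup>*\<^sup>* (dijkstra_init s) S" "valid_adj E adj" "ds_heap S = {}"
    and "E \<subseteq> V \<times> V" "x \<in> V - {s}" "(s, x) \<in> E\<^sup>*"
    and stamps: "\<forall>x \<in> V - {s}. real (ds_push S x) \<le> r x \<and> r x \<le> real (ds_pop S x)"
    and "inj_on r (V - {s})"
  shows "\<exists>p \<in> V. (p, x) \<in> E \<and> (r(s := 0)) p < (r(s := 0)) x"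
proof -
  from assms(5) have "x \<noteq> s" by blast
  with dijkstra_push_after_pop_of_in_neighbour[OF assms(1-3,6)]
  obtain p where p: "(p, x) \<in> E" "p \<noteq> x" "ds_pop S p \<le> ds_push S x"
    and push: "1 \<le> ds_push S x"
    by blast
  from p(1) assms(4) have "p \<in> V" by blast
  from assms(5) stamps have pushed: "real (ds_push S x) \<le> r x" by blast
  have "(r(s := 0)) p < r x"
  proof (cases "p = s")
    case True
    from push have "1 \<le> real (ds_push S x)" by simp
    with True pushed show ?thesis by simp
  next
    case False
    with \<open>p \<in> V\<close> stamps have "r p \<le> real (ds_pop S p)" by blast
    also have "\<dots> \<le> r x"
      using p(3) pushed by linarith
    finally have "r p \<le> r x" .
    moreover from False assms(5,8) p(2) \<open>p \<in> V\<close> have "r p \<noteq> r x"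
      by (auto simp: inj_on_def)
    ultimately show ?thesis
      using False by simp
  qed
  moreover from assms(5) have "(r(s := 0)) x = r x" by simp
  ultimately show ?thesis
    using \<open>p \<in> V\<close> p(1) by metis
qed

theorem lemma7:
  fixes V :: "'v set" and E :: "('v \<times> 'v) set" and w :: "'v \<Rightarrow> 'v \<Rightarrow> real"
    and s :: 'v and adj :: "'v \<Rightarrow> 'v list" and S :: "'v dstate"
    and r :: "'v \<Rightarrow> real" and L :: "'v list"
  assumes "finite V" and "E \<subseteq> V \<times> V" and "s \<in> V"
    and "\<forall>(u, v) \<in> E. 0 < w u v"
    and "\<forall>v \<in> V. (s, v) \<in> E\<^sup>*"
    and "inj_on (sp_dist E w s) V"
    and "valid_adj E adj"
    and "(dijkstra_step w adj)\<^sup>*\<^sup>* (dijkstra_init s) S" and "ds_heap S = {}"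
    and "\<forall>x \<in> V - {s}. real (ds_push S x) \<le> r x \<and> r x \<le> real (ds_pop S x)"
    and "inj_on r (V - {s})"
    and "set L = V - {s}" and "distinct L" and "sorted_wrt (\<lambda>x y. r x < r y) L"
  shows "is_linearization V E s L"
proof -
  define d where "d = r(s := 0)"
  have "\<forall>x \<in> V - {s}. \<exists>p \<in> V. (p, x) \<in> E \<and> d p < d x"
    using in_neighbour_with_smaller_timestamp[OF assms(8,7,9,2) _ _ assms(10,11)] assms(5)
    unfolding d_def by blast
  moreover have "sorted_wrt (\<lambda>x y. d x < d y) L"
    using sorted_wrt_mono_rel[OF _ assms(14)] assms(12) by (fastforce simp: d_def)
  ultimately show ?thesis
    using is_linearization_if_in_neighbour_below[OF assms(1,3) _ assms(12,13)] by blast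
qed

end
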